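(* Let $G$ be a finite group of order $n\geq 2$. The number of subsets $S\subseteq G$ such that $\varphi(S)=S$ for some automorphism $\varphi\in\mathrm{Aut}(G)\setminus\{1\}$ is at most $2^{3n/4+(\log_2 n)^2}$. *)

theory Defs
  imports "HOL-Algebra.Bij" "HOL-Algebra.Coset" Complex_Main
begin

end

theory Submission
  imports Defs "HOL-Algebra.Generated_Groups"
begin

text \<open>
  A nontrivial automorphism \<open>\<phi>\<close> fixes a proper subgroup \<open>F\<close>, so \<open>|F| \<le> n/2\<close>. On the moved
  points take a set \<open>D\<close> disjoint from \<open>\<phi>(D)\<close> and maximal with this property: every moved point
  lies in \<open>D\<close>, in \<open>\<phi>(D)\<close> or in \<open>\<phi>\<^sup>-\<^sup>1(D)\<close>, and \<open>2|D| \<le> n - |F|\<close>. A \<open>\<phi>\<close>-invariant set is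
  determined by its trace on \<open>F \<union> D\<close>, which has at most \<open>3n/4\<close> elements. Finally, a subgroup has
  at most half the elements of any subgroup properly containing it, so \<open>G\<close> is generated by at most
  \<open>log\<^sub>2 n\<close> elements; an automorphism is determined by their images, whence
  \<open>|Aut G| \<le> n\<^bsup>log\<^sub>2 n\<^esup>\<close>, and the union bound over \<open>Aut G\<close> gives the claim.
\<close>

lemma exists_separated_covering_subset:
  assumes "finite N" and "f ` N \<subseteq> N" and "\<And>x. x \<in> N \<Longrightarrow> f x \<noteq> x"
  obtains D where "D \<subseteq> N" and "D \<inter> f ` D = {}"
    and "\<And>x. x \<in> N \<Longrightarrow> x \<in> D \<or> x \<in> f ` D \<or> f x \<in> D"
proof -
  define Sep where "Sep = {D. D \<subseteq> N \<and> D \<inter> f ` D = {}}"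
  have "finite Sep" unfolding Sep_def using \<open>finite N\<close> by simp
  moreover have "{} \<in> Sep" unfolding Sep_def by simp
  ultimately obtain D where D: "D \<in> Sep" and maximal: "\<And>D'. D' \<in> Sep \<Longrightarrow> D \<subseteq> D' \<Longrightarrow> D' = D"
    using finite_has_maximal2[of Sep "{}"] by metis
  have "x \<in> D \<or> x \<in> f ` D \<or> f x \<in> D" if "x \<in> N" for x
  proof (rule ccontr)
    assume "\<not> ?thesis"
    with that D assms(3)[of x] have "insert x D \<in> Sep" unfolding Sep_def by auto
    from maximal[OF this] \<open>\<not> ?thesis\<close> show False by auto
  qed
  with D show thesis using that unfolding Sep_def by blast
qed

lemma card_separated_subset_le:
  assumes "finite N" and "inj_on f N" and "f ` N \<subseteq> N" and "D \<subseteq> N" and "D \<inter> f ` D = {}"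
  shows "2 * card D \<le> card N"
proof -
  have "finite D" using assms(1,4) by (rule finite_subset[rotated])
  have "card D + card (f ` D) = card (D \<union> f ` D)"
    using card_Un_disjoint[OF \<open>finite D\<close> finite_imageI[OF \<open>finite D\<close>] assms(5)] by simp
  also have "\<dots> \<le> card N" using assms(1,3,4) by (intro card_mono) auto
  finally show ?thesis using card_image[OF inj_on_subset[OF assms(2,4)]] by simp
qed

lemma invariant_subset_mem_iff:
  assumes "inj_on f A" and "S \<subseteq> A" and "f ` S = S" and "x \<in> A"
  shows "f x \<in> S \<longleftrightarrow> x \<in> S"
  using assms by (metis imageI inj_on_image_mem_iff)

lemma card_invariant_subsets_le_card_Pow:
  assumes "finite A" and "inj_on f A" and "R \<subseteq> A"
    and cover: "\<And>x. x \<in> A - R \<Longrightarrow> x \<in> f ` R \<or> f x \<in> R"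
  shows "card {S. S \<subseteq> A \<and> f ` S = S} \<le> 2 ^ card R"
proof -
  have "inj_on (\<lambda>S. S \<inter> R) {S. S \<subseteq> A \<and> f ` S = S}"
  proof (rule inj_onI)
    fix S1 S2
    assume S1: "S1 \<in> {S. S \<subseteq> A \<and> f ` S = S}" and S2: "S2 \<in> {S. S \<subseteq> A \<and> f ` S = S}"
      and trace: "S1 \<inter> R = S2 \<inter> R"
    have mem_iff: "f y \<in> S1 \<longleftrightarrow> y \<in> S1" "f y \<in> S2 \<longleftrightarrow> y \<in> S2" if "y \<in> A" for y
      using invariant_subset_mem_iff[OF assms(2) _ _ that] S1 S2 by auto
    have on_R: "y \<in> S1 \<longleftrightarrow> y \<in> S2" if "y \<in> R" for y
      using trace that by blast
    have "x \<in> S1 \<longleftrightarrow> x \<in> S2" for x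
    proof (cases "x \<in> A - R")
      case True
      then consider d where "d \<in> R" and "x = f d" | "f x \<in> R" using cover by blast
      then show ?thesis
      proof cases
        case 1
        then show ?thesis using on_R[of d] mem_iff[of d] assms(3) by auto
      next
        case 2
        then show ?thesis using on_R[of "f x"] mem_iff[of x] True by simp
      qed
    qed (use on_R S1 S2 in auto)
    then show "S1 = S2" by blast
  qed
  moreover have "finite R" using assms(1,3) by (rule finite_subset[rotated])
  ultimately have "card {S. S \<subseteq> A \<and> f ` S = S} \<le> card (Pow R)"
    using card_inj_on_le[of _ _ "Pow R"] by blast
  then show ?thesis using \<open>finite R\<close> by (simp add: card_Pow)
qed

lemma card_invariant_subsets_le:
  assumes "finite A" and "bij_betw f A A"
  shows "card {S. S \<subseteq> A \<and> f ` S = S} \<le> 2 ^ ((card A + card {x \<in> A. f x = x}) div 2)"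
proof -
  define F where "F = {x \<in> A. f x = x}"
  define N where "N = A - F"
  have inj: "inj_on f A" and maps: "f ` A = A" using assms(2) by (auto simp: bij_betw_def)
  have "f ` N \<subseteq> N" unfolding N_def F_def using inj maps by (auto dest: inj_onD)
  moreover have "finite N" unfolding N_def using assms(1) by simp
  ultimately obtain D where DN: "D \<subseteq> N" and disj: "D \<inter> f ` D = {}"
    and cover: "\<And>x. x \<in> N \<Longrightarrow> x \<in> D \<or> x \<in> f ` D \<or> f x \<in> D"
    using exists_separated_covering_subset[of N f] unfolding N_def F_def by blast
  have "2 * card D \<le> card N"
    using card_separated_subset_le[OF \<open>finite N\<close> _ \<open>f ` N \<subseteq> N\<close> DN disj] inj
    unfolding N_def by (auto intro: inj_on_subset)
  moreover have "card N = card A - card F"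
    unfolding N_def F_def using assms(1) by (simp add: card_Diff_subset)
  moreover have "card (F \<union> D) \<le> card F + card D" by (rule card_Un_le)
  moreover have "card F \<le> card A" unfolding F_def using assms(1) by (simp add: card_mono)
  ultimately have "card (F \<union> D) \<le> (card A + card F) div 2" by linarith
  moreover have "card {S. S \<subseteq> A \<and> f ` S = S} \<le> 2 ^ card (F \<union> D)"
    by (rule card_invariant_subsets_le_card_Pow[OF assms(1) inj])
      (use DN cover in \<open>auto simp: N_def F_def\<close>)
  ultimately show ?thesis unfolding F_def by (meson le_trans one_le_numeral power_increasing)
qed

lemma power_le_powr_log_squared:
  fixes n k :: nat
  assumes "2 ^ k \<le> n"
  shows "real n ^ k \<le> 2 powr (log 2 (real n))\<^sup>2"
proof -
  have "n > 0" using assms by (metis not_gr0 le_zero_eq power_not_zero zero_neq_numeral)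
  have "real (2 ^ k) \<le> real n" using assms by (rule of_nat_mono)
  then have "2 powr real k \<le> real n" by (simp add: powr_realpow)
  then have k_le: "real k \<le> log 2 (real n)" using \<open>n > 0\<close> by (simp add: le_log_iff)
  have "real n ^ k = (2 powr log 2 (real n)) powr real k"
    using \<open>n > 0\<close> by (simp add: powr_realpow)
  also have "\<dots> = 2 powr (real k * log 2 (real n))" by (simp add: powr_powr mult.commute)
  also have "\<dots> \<le> 2 powr (log 2 (real n))\<^sup>2"
    using mult_right_mono[OF k_le] \<open>n > 0\<close> by (simp add: power2_eq_square)
  finally show ?thesis .
qed

lemma card_UN_le_card_mult:
  assumes "finite A" and "\<And>a. a \<in> A \<Longrightarrow> real (card (B a)) \<le> c"
  shows "real (card (\<Union>a\<in>A. B a)) \<le> real (card A) * c"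
proof -
  have "real (card (\<Union>a\<in>A. B a)) \<le> (\<Sum>a\<in>A. real (card (B a)))"
    using of_nat_mono[OF card_UN_le[OF assms(1)], where 'a = real] by simp
  also have "\<dots> \<le> real (card A) * c" using sum_mono[OF assms(2)] by simp
  finally show ?thesis .
qed

context group begin

lemma card_proper_subgroup_le:
  assumes "finite K" and "subgroup H G" and "subgroup K G" and "H \<subset> K"
  shows "2 * card H \<le> card K"
proof -
  interpret K: group "G\<lparr>carrier := K\<rparr>" using subgroup_imp_group[OF assms(3)] .
  have "card (rcosets\<^bsub>G\<lparr>carrier := K\<rparr>\<^esub> H) * card H = card K"
    using K.lagrange[OF subgroup_incl[OF assms(2,3)]] assms(4) by (simp add: order_def)
  then obtain c where c: "card K = card H * c" by (metis mult.commute)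
  moreover have "card H < card K" using assms(1,4) by (rule psubset_card_mono)
  ultimately have "2 \<le> c" by (cases c) auto
  then show ?thesis using c by simp
qed

lemma hom_equalizer_subgroup:
  assumes "group H" and "f \<in> hom G H" and "g \<in> hom G H"
  shows "subgroup {x \<in> carrier G. f x = g x} G"
proof -
  interpret f: group_hom G H f by (simp add: assms group_hom_axioms_def group_hom_def is_group)
  interpret g: group_hom G H g by (simp add: assms group_hom_axioms_def group_hom_def is_group)
  show ?thesis
    by (rule subgroupI) (auto simp: f.hom_mult g.hom_mult f.hom_inv g.hom_inv)
qed

lemma hom_eq_on_generate:
  assumes "group H" and "f \<in> hom G H" and "g \<in> hom G H"
    and "T \<subseteq> carrier G" and "\<And>x. x \<in> T \<Longrightarrow> f x = g x" and "x \<in> generate G T"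
  shows "f x = g x"
  using generate_subgroup_incl[OF _ hom_equalizer_subgroup[OF assms(1-3)], of T] assms(4-6) by auto

lemma card_generate_pos:
  assumes "finite (carrier G)" and "T \<subseteq> carrier G"
  shows "card (generate G T) > 0"
  using subgroup.one_closed[OF generate_is_subgroup[OF assms(2)]]
    finite_subset[OF generate_incl[OF assms(2)] assms(1)] card_gt_0_iff by blast

lemma exists_generating_superset:
  assumes "finite (carrier G)" and "T \<subseteq> carrier G" and "2 ^ card T \<le> card (generate G T)"
  shows "\<exists>T' \<subseteq> carrier G. 2 ^ card T' \<le> order G \<and> generate G T' = carrier G"
  using assms(2,3)
proof (induction "order G - card (generate G T)" arbitrary: T rule: less_induct)
  case less
  show ?case
  proof (cases "generate G T = carrier G")
    case True
    then show ?thesis using less.prems by (auto simp: order_def)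
  next
    case False
    then obtain g where g: "g \<in> carrier G" "g \<notin> generate G T"
      using generate_incl[OF less.prems(1)] by blast
    have gT_sub: "insert g T \<subseteq> carrier G" using g less.prems(1) by blast
    have fin_gen: "finite (generate G T')" if "T' \<subseteq> carrier G" for T'
      using finite_subset[OF generate_incl[OF that] assms(1)] .
    have psub: "generate G T \<subset> generate G (insert g T)"
      using mono_generate[of T "insert g T"] g incl[of g "insert g T"] by auto
    have "subgroup (generate G T) G" "subgroup (generate G (insert g T)) G"
      using generate_is_subgroup less.prems(1) gT_sub by auto
    then have double: "2 * card (generate G T) \<le> card (generate G (insert g T))"
      using card_proper_subgroup_le[OF fin_gen[OF gT_sub] _ _ psub] by blast
    have "card (generate G (insert g T)) \<le> order G"
      using card_mono[OF assms(1) generate_incl[OF gT_sub]] by (simp add: order_def)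
    then have "order G - card (generate G (insert g T)) < order G - card (generate G T)"
      using double card_generate_pos[OF assms(1) less.prems(1)] by linarith
    moreover have "g \<notin> T" using g(2) incl[of g T] by blast
    then have "2 ^ card (insert g T) \<le> card (generate G (insert g T))"
      using less.prems(2) double finite_subset[OF less.prems(1) assms(1)] by simp
    ultimately show ?thesis using less.hyps[OF _ gT_sub] by blast
  qed
qed

lemma exists_small_generating_set:
  assumes "finite (carrier G)"
  obtains T where "T \<subseteq> carrier G" and "2 ^ card T \<le> order G" and "generate G T = carrier G"
  using exists_generating_superset[OF assms, of "{}"] card_generate_pos[OF assms, of "{}"] that
  by auto

lemma inj_on_restrict_auto:
  assumes "T \<subseteq> carrier G" and "generate G T = carrier G"
  shows "inj_on (\<lambda>\<phi>. restrict \<phi> T) (auto G)"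
proof (rule inj_onI)
  fix \<phi> \<psi> assume \<phi>: "\<phi> \<in> auto G" and \<psi>: "\<psi> \<in> auto G" and eq: "restrict \<phi> T = restrict \<psi> T"
  have hom: "\<phi> \<in> hom G G" "\<psi> \<in> hom G G" using \<phi> \<psi> by (auto simp: auto_def)
  have agree: "\<phi> y = \<psi> y" if "y \<in> T" for y using fun_cong[OF eq, of y] that by simp
  have "\<phi> x = \<psi> x" if "x \<in> carrier G" for x
    using hom_eq_on_generate[OF is_group hom assms(1) agree, of x] assms(2) that by simp
  moreover have "\<phi> \<in> extensional (carrier G)" "\<psi> \<in> extensional (carrier G)"
    using \<phi> \<psi> by (auto simp: auto_def Bij_def)
  ultimately show "\<phi> = \<psi>" by (rule extensionalityI[rotated 2])
qed

lemma card_auto_le: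
  assumes "finite (carrier G)" and "T \<subseteq> carrier G" and "generate G T = carrier G"
  shows "finite (auto G)" and "card (auto G) \<le> order G ^ card T"
proof -
  have img: "(\<lambda>\<phi>. restrict \<phi> T) ` auto G \<subseteq> PiE T (\<lambda>_. carrier G)"
    using assms(2) by (force simp: auto_def Bij_def bij_betw_def)
  have fin: "finite (PiE T (\<lambda>_. carrier G))"
    using assms(1,2) finite_subset by (blast intro: finite_PiE)
  note inj = inj_on_restrict_auto[OF assms(2,3)]
  show "finite (auto G)" by (rule inj_on_finite[OF inj img fin])
  have "card (auto G) \<le> card (PiE T (\<lambda>_. carrier G))"
    using card_inj_on_le[OF inj img fin] .
  also have "\<dots> = order G ^ card T"
    using finite_subset[OF assms(2,1)] by (simp add: card_PiE order_def)
  finally show "card (auto G) \<le> order G ^ card T" .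
qed

lemma card_fixed_points_auto_le:
  assumes "finite (carrier G)" and "\<phi> \<in> auto G" and "\<phi> \<noteq> (\<lambda>x \<in> carrier G. x)"
  shows "2 * card {x \<in> carrier G. \<phi> x = x} \<le> order G"
proof -
  have "(\<lambda>x. x) \<in> hom G G" by (simp add: hom_def)
  then have fixed_subgroup: "subgroup {x \<in> carrier G. \<phi> x = x} G"
    using hom_equalizer_subgroup[OF is_group, of \<phi> "\<lambda>x. x"] assms(2) by (simp add: auto_def)
  have "\<phi> \<in> extensional (carrier G)" using assms(2) by (simp add: auto_def Bij_def)
  then have "{x \<in> carrier G. \<phi> x = x} \<subset> carrier G"
    using assms(3) extensionalityI[of \<phi> "carrier G" "\<lambda>x \<in> carrier G. x"] by auto
  then show ?thesis
    using card_proper_subgroup_le[OF assms(1) fixed_subgroup subgroup_self] by (simp add: order_def)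
qed

lemma card_invariant_subsets_auto_le:
  assumes "finite (carrier G)" and "\<phi> \<in> auto G" and "\<phi> \<noteq> (\<lambda>x \<in> carrier G. x)"
  shows "real (card {S. S \<subseteq> carrier G \<and> \<phi> ` S = S}) \<le> 2 powr (3 * real (order G) / 4)"
proof -
  define m where "m = (order G + card {x \<in> carrier G. \<phi> x = x}) div 2"
  have "bij_betw \<phi> (carrier G) (carrier G)" using assms(2) by (simp add: auto_def Bij_def)
  then have "card {S. S \<subseteq> carrier G \<and> \<phi> ` S = S} \<le> 2 ^ m"
    using card_invariant_subsets_le[OF assms(1)] unfolding m_def order_def by blast
  from of_nat_mono[OF this, where 'a = real]
  have "real (card {S. S \<subseteq> carrier G \<and> \<phi> ` S = S}) \<le> 2 ^ m" by simp
  also have "\<dots> = 2 powr real m" by (simp add: powr_realpow)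
  also have "\<dots> \<le> 2 powr (3 * real (order G) / 4)"
    using card_fixed_points_auto_le[OF assms] unfolding m_def by simp
  finally show ?thesis .
qed

lemma card_auto_le_powr:
  assumes "finite (carrier G)"
  shows "finite (auto G)" and "real (card (auto G)) \<le> 2 powr (log 2 (real (order G)))\<^sup>2"
proof -
  obtain T where T: "T \<subseteq> carrier G" "2 ^ card T \<le> order G" "generate G T = carrier G"
    using exists_small_generating_set[OF assms] .
  show "finite (auto G)" using card_auto_le(1)[OF assms T(1,3)] .
  have "real (card (auto G)) \<le> real (order G) ^ card T"
    using of_nat_mono[OF card_auto_le(2)[OF assms T(1,3)], where 'a = real] by simp
  also have "\<dots> \<le> 2 powr (log 2 (real (order G)))\<^sup>2"
    using T(2) by (rule power_le_powr_log_squared)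
  finally show "real (card (auto G)) \<le> 2 powr (log 2 (real (order G)))\<^sup>2" .
qed

end

theorem lemma5p2:
  fixes G :: "('a, 'b) monoid_scheme"
  assumes "group G"
    and "finite (carrier G)"
    and "order G \<ge> 2"
  shows "real (card {S. S \<subseteq> carrier G \<and>
            (\<exists>\<phi> \<in> auto G. \<phi> \<noteq> (\<lambda>x \<in> carrier G. x) \<and> \<phi> ` S = S)})
         \<le> 2 powr (3 * real (order G) / 4 + (log 2 (real (order G)))\<^sup>2)"
proof -
  interpret group G by fact
  define A where "A = auto G - {\<lambda>x \<in> carrier G. x}"
  have "finite A" using card_auto_le_powr(1)[OF assms(2)] unfolding A_def by simp
  have "card A \<le> card (auto G)"
    unfolding A_def using card_auto_le_powr(1)[OF assms(2)] by (rule card_mono) auto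
  then have card_A: "real (card A) \<le> 2 powr (log 2 (real (order G)))\<^sup>2"
    using card_auto_le_powr(2)[OF assms(2)] by linarith
  have union: "{S. S \<subseteq> carrier G \<and> (\<exists>\<phi> \<in> auto G. \<phi> \<noteq> (\<lambda>x \<in> carrier G. x) \<and> \<phi> ` S = S)}
      = (\<Union>\<phi>\<in>A. {S. S \<subseteq> carrier G \<and> \<phi> ` S = S})" unfolding A_def by auto
  have "real (card (\<Union>\<phi>\<in>A. {S. S \<subseteq> carrier G \<and> \<phi> ` S = S}))
      \<le> real (card A) * 2 powr (3 * real (order G) / 4)"
    by (rule card_UN_le_card_mult[OF \<open>finite A\<close>])
      (use card_invariant_subsets_auto_le[OF assms(2)] in \<open>simp add: A_def\<close>)
  also have "\<dots> \<le> 2 powr (log 2 (real (order G)))\<^sup>2 * 2 powr (3 * real (order G) / 4)"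
    using card_A by (rule mult_right_mono) simp
  also have "\<dots> = 2 powr (3 * real (order G) / 4 + (log 2 (real (order G)))\<^sup>2)"
    by (simp add: powr_add)
  finally show ?thesis unfolding union .
qed

end
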